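(* Let $M$ be an abelian group of exponent greater than $2$. Then for the loop $L_M$: $N_\lambda(L_M)=\{(A,x)\in L_M : x^2=1\}$, $N_\mu(L_M)=N_\rho(L_M)=\{(1,x): x\in M\}$, and $Z(L_M)=N(L_M)=C(L_M)=\{(1,x): x\in M,\ x^2=1\}$.
   Context: Let $K=\{1,a,b,c\}$ be the Klein four-group. Set $L_M=K\times M$ with the operation $(A,x)*(B,y)=(AB,xy)$ if $B=1$, and $(A,x)*(B,y)=(AB,x^{-1}y)$ if $B\neq 1$. For a loop $L$: the left nucleus is $N_\lambda(L)=\{u:(uy)z=u(yz)\ \forall y,z\}$, the middle nucleus $N_\mu(L)=\{u:(xu)z=x(uz)\ \forall x,z\}$, the right nucleus $N_\rho(L)=\{u:(xy)u=x(yu)\ \forall x,y\}$, the nucleus $N(L)=N_\lambda\cap N_\mu\cap N_\rho$, the commutant $C(L)=\{u: ux=xu\ \forall x\}$, and the center $Z(L)=N(L)\cap C(L)$. *)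

theory Defs
  imports "HOL-Algebra.Group"
begin

datatype klein = K1 | Ka | Kb | Kc

fun kmult :: "klein \<Rightarrow> klein \<Rightarrow> klein" where
  "kmult K1 y = y"
| "kmult x K1 = x"
| "kmult Ka Ka = K1" | "kmult Ka Kb = Kc" | "kmult Ka Kc = Kb"
| "kmult Kb Ka = Kc" | "kmult Kb Kb = K1" | "kmult Kb Kc = Ka"
| "kmult Kc Ka = Kb" | "kmult Kc Kb = Ka" | "kmult Kc Kc = K1"

definition LM_carrier :: "('a, 'b) monoid_scheme \<Rightarrow> (klein \<times> 'a) set" where
  "LM_carrier M = UNIV \<times> carrier M"

definition LM_mult :: "('a, 'b) monoid_scheme \<Rightarrow> klein \<times> 'a \<Rightarrow> klein \<times> 'a \<Rightarrow> klein \<times> 'a" where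
  "LM_mult M p q = (case p of (A, x) \<Rightarrow> case q of (B, y) \<Rightarrow>
     if B = K1 then (kmult A B, x \<otimes>\<^bsub>M\<^esub> y)
     else (kmult A B, inv\<^bsub>M\<^esub> x \<otimes>\<^bsub>M\<^esub> y))"

definition left_nucleus :: "'c set \<Rightarrow> ('c \<Rightarrow> 'c \<Rightarrow> 'c) \<Rightarrow> 'c set" where
  "left_nucleus S f = {u \<in> S. \<forall>y\<in>S. \<forall>z\<in>S. f (f u y) z = f u (f y z)}"

definition middle_nucleus :: "'c set \<Rightarrow> ('c \<Rightarrow> 'c \<Rightarrow> 'c) \<Rightarrow> 'c set" where
  "middle_nucleus S f = {u \<in> S. \<forall>x\<in>S. \<forall>z\<in>S. f (f x u) z = f x (f u z)}"

definition right_nucleus :: "'c set \<Rightarrow> ('c \<Rightarrow> 'c \<Rightarrow> 'c) \<Rightarrow> 'c set" where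
  "right_nucleus S f = {u \<in> S. \<forall>x\<in>S. \<forall>y\<in>S. f (f x y) u = f x (f y u)}"

definition nucleus :: "'c set \<Rightarrow> ('c \<Rightarrow> 'c \<Rightarrow> 'c) \<Rightarrow> 'c set" where
  "nucleus S f = left_nucleus S f \<inter> middle_nucleus S f \<inter> right_nucleus S f"

definition commutant :: "'c set \<Rightarrow> ('c \<Rightarrow> 'c \<Rightarrow> 'c) \<Rightarrow> 'c set" where
  "commutant S f = {u \<in> S. \<forall>x\<in>S. f u x = f x u}"

definition center :: "'c set \<Rightarrow> ('c \<Rightarrow> 'c \<Rightarrow> 'c) \<Rightarrow> 'c set" where
  "center S f = nucleus S f \<inter> commutant S f"

end

theory Submission
  imports Defs
begin

text \<open>Write \<open>x^B\<close> for \<open>x\<close> if \<open>B = 1\<close> and for \<open>x\<inverse>\<close> otherwise, so that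
  \<open>(A,x)(B,y) = (AB, x^B y)\<close>. In an abelian group \<open>x \<mapsto> x^B\<close> is an automorphism, and comparing
  \<open>((A,x)(B,y))(C,z)\<close> with \<open>(A,x)((B,y)(C,z))\<close> leaves only \<open>(x^B)^C = x^(BC)\<close>, which fails exactly
  when \<open>B\<close>, \<open>C\<close> are distinct non-identity elements of the Klein group and \<open>x\<inverse> \<noteq> x\<close>.
  Hence \<open>(A,x)\<close> lies in the left nucleus iff \<open>x\<^sup>2 = 1\<close>, while an element \<open>g\<close> with \<open>g\<^sup>2 \<noteq> 1\<close>
  in the outer position forces the Klein component of middle and right nuclear elements to be trivial.
  Commuting with \<open>(1,g)\<close> forces \<open>A = 1\<close>, and commuting with \<open>(a,1)\<close> then forces \<open>x\<^sup>2 = 1\<close>.\<close>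

lemma kmult_assoc: "kmult (kmult A B) C = kmult A (kmult B C)"
  by (cases A; cases B; cases C; simp)

lemma kmult_right_one [simp]: "kmult A K1 = A"
  by (cases A) simp_all

lemma klein_ex_other_nontrivial: "\<exists>C. C \<noteq> K1 \<and> C \<noteq> B"
  by (rule exI[of _ "if B = Ka then Kb else Ka"]) simp

definition twist :: "('a, 'b) monoid_scheme \<Rightarrow> klein \<Rightarrow> 'a \<Rightarrow> 'a" where
  "twist M B x = (if B = K1 then x else inv\<^bsub>M\<^esub> x)"

lemma LM_mult_twist: "LM_mult M (A, x) (B, y) = (kmult A B, twist M B x \<otimes>\<^bsub>M\<^esub> y)"
  by (simp add: LM_mult_def twist_def)

context comm_group
begin

lemma twist_closed [simp]: "x \<in> carrier G \<Longrightarrow> twist G B x \<in> carrier G"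
  by (simp add: twist_def)

lemma twist_mult: "x \<in> carrier G \<Longrightarrow> y \<in> carrier G \<Longrightarrow> twist G C (x \<otimes> y) = twist G C x \<otimes> twist G C y"
  by (simp add: twist_def inv_mult)

lemma twist_twist_iff:
  "x \<in> carrier G \<Longrightarrow>
    twist G C (twist G B x) = twist G (kmult B C) x \<longleftrightarrow> B = K1 \<or> C = K1 \<or> B = C \<or> inv x = x"
  by (cases B; cases C; auto simp: twist_def eq_commute)

lemma inv_eq_self_iff: "x \<in> carrier G \<Longrightarrow> inv x = x \<longleftrightarrow> x \<otimes> x = \<one>"
  by (metis inv_equality inv_closed r_inv)

lemma LM_assoc_iff:
  assumes "x \<in> carrier G" "y \<in> carrier G" "z \<in> carrier G"
  shows "LM_mult G (LM_mult G (A, x) (B, y)) (C, z) = LM_mult G (A, x) (LM_mult G (B, y) (C, z))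
     \<longleftrightarrow> B = K1 \<or> C = K1 \<or> B = C \<or> x \<otimes> x = \<one>"
proof -
  have "twist G C (twist G B x \<otimes> y) \<otimes> z = twist G C (twist G B x) \<otimes> (twist G C y \<otimes> z)"
    using assms by (simp add: twist_mult m_assoc)
  moreover have "twist G C (twist G B x) \<otimes> (twist G C y \<otimes> z) = twist G (kmult B C) x \<otimes> (twist G C y \<otimes> z)
      \<longleftrightarrow> twist G C (twist G B x) = twist G (kmult B C) x"
    using assms by (intro right_cancel) auto
  ultimately show ?thesis
    using assms by (simp add: LM_mult_twist kmult_assoc twist_twist_iff inv_eq_self_iff)
qed

lemma left_nucleus_LM:
  "left_nucleus (LM_carrier G) (LM_mult G) = {(A, x). A \<in> UNIV \<and> x \<in> carrier G \<and> x \<otimes> x = \<one>}"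
proof (intro Set.set_eqI iffI)
  fix p assume p: "p \<in> left_nucleus (LM_carrier G) (LM_mult G)"
  then obtain A x where [simp]: "p = (A, x)" and x: "x \<in> carrier G"
    by (auto simp: left_nucleus_def LM_carrier_def)
  from p have "LM_mult G (LM_mult G (A, x) (Ka, \<one>)) (Kb, \<one>) = LM_mult G (A, x) (LM_mult G (Ka, \<one>) (Kb, \<one>))"
    by (simp add: left_nucleus_def LM_carrier_def)
  with x show "p \<in> {(A, x). A \<in> UNIV \<and> x \<in> carrier G \<and> x \<otimes> x = \<one>}"
    by (simp add: LM_assoc_iff)
qed (auto simp: left_nucleus_def LM_carrier_def LM_assoc_iff)

lemma middle_nucleus_LM:
  assumes g: "g \<in> carrier G" "g \<otimes> g \<noteq> \<one>"
  shows "middle_nucleus (LM_carrier G) (LM_mult G) = {(K1, x) | x. x \<in> carrier G}"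
proof (intro Set.set_eqI iffI)
  fix p assume p: "p \<in> middle_nucleus (LM_carrier G) (LM_mult G)"
  then obtain B y where [simp]: "p = (B, y)" and y: "y \<in> carrier G"
    by (auto simp: middle_nucleus_def LM_carrier_def)
  obtain C where C: "C \<noteq> K1" "C \<noteq> B" using klein_ex_other_nontrivial by blast
  from p g have "LM_mult G (LM_mult G (K1, g) (B, y)) (C, \<one>) = LM_mult G (K1, g) (LM_mult G (B, y) (C, \<one>))"
    by (simp add: middle_nucleus_def LM_carrier_def)
  with g y C show "p \<in> {(K1, x) | x. x \<in> carrier G}"
    by (simp add: LM_assoc_iff)
qed (auto simp: middle_nucleus_def LM_carrier_def LM_assoc_iff)

lemma right_nucleus_LM:
  assumes g: "g \<in> carrier G" "g \<otimes> g \<noteq> \<one>"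
  shows "right_nucleus (LM_carrier G) (LM_mult G) = {(K1, x) | x. x \<in> carrier G}"
proof (intro Set.set_eqI iffI)
  fix p assume p: "p \<in> right_nucleus (LM_carrier G) (LM_mult G)"
  then obtain C z where [simp]: "p = (C, z)" and z: "z \<in> carrier G"
    by (auto simp: right_nucleus_def LM_carrier_def)
  obtain B where B: "B \<noteq> K1" "B \<noteq> C" using klein_ex_other_nontrivial by blast
  from p g have "LM_mult G (LM_mult G (K1, g) (B, \<one>)) (C, z) = LM_mult G (K1, g) (LM_mult G (B, \<one>) (C, z))"
    by (simp add: right_nucleus_def LM_carrier_def)
  with g z B show "p \<in> {(K1, x) | x. x \<in> carrier G}"
    by (auto simp: LM_assoc_iff)
qed (auto simp: right_nucleus_def LM_carrier_def LM_assoc_iff)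

lemma commutant_LM:
  assumes g: "g \<in> carrier G" "g \<otimes> g \<noteq> \<one>"
  shows "commutant (LM_carrier G) (LM_mult G) = {(K1, x) | x. x \<in> carrier G \<and> x \<otimes> x = \<one>}"
proof (intro Set.set_eqI iffI)
  fix p assume p: "p \<in> commutant (LM_carrier G) (LM_mult G)"
  then obtain A x where [simp]: "p = (A, x)" and x: "x \<in> carrier G"
    by (auto simp: commutant_def LM_carrier_def)
  have A: "A = K1"
  proof (rule ccontr)
    assume "A \<noteq> K1"
    moreover from p g have "LM_mult G (A, x) (K1, g) = LM_mult G (K1, g) (A, x)"
      by (simp add: commutant_def LM_carrier_def)
    ultimately have "x \<otimes> g = x \<otimes> inv g"
      using x g by (simp add: LM_mult_twist twist_def m_comm)
    with x g show False
      by (simp add: inv_eq_self_iff[symmetric])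
  qed
  from p have "LM_mult G (A, x) (Ka, \<one>) = LM_mult G (Ka, \<one>) (A, x)"
    by (simp add: commutant_def LM_carrier_def)
  with A x show "p \<in> {(K1, x) | x. x \<in> carrier G \<and> x \<otimes> x = \<one>}"
    by (simp add: LM_mult_twist twist_def inv_eq_self_iff)
next
  fix p assume "p \<in> {(K1, x) | x. x \<in> carrier G \<and> x \<otimes> x = \<one>}"
  then obtain x where [simp]: "p = (K1, x)" and x: "x \<in> carrier G" "inv x = x"
    by (auto simp: inv_eq_self_iff)
  then show "p \<in> commutant (LM_carrier G) (LM_mult G)"
    by (auto simp: commutant_def LM_carrier_def LM_mult_twist twist_def m_comm)
qed

end

theorem proposition3p6:
  fixes M :: "('a, 'b) monoid_scheme"
  assumes "comm_group M"
    and "\<exists>x\<in>carrier M. x \<otimes>\<^bsub>M\<^esub> x \<noteq> \<one>\<^bsub>M\<^esub>"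
  shows "left_nucleus (LM_carrier M) (LM_mult M)
           = {(A, x). A \<in> UNIV \<and> x \<in> carrier M \<and> x \<otimes>\<^bsub>M\<^esub> x = \<one>\<^bsub>M\<^esub>}
    \<and> middle_nucleus (LM_carrier M) (LM_mult M) = {(K1, x) | x. x \<in> carrier M}
    \<and> right_nucleus (LM_carrier M) (LM_mult M) = {(K1, x) | x. x \<in> carrier M}
    \<and> center (LM_carrier M) (LM_mult M)
           = {(K1, x) | x. x \<in> carrier M \<and> x \<otimes>\<^bsub>M\<^esub> x = \<one>\<^bsub>M\<^esub>}
    \<and> nucleus (LM_carrier M) (LM_mult M)
           = {(K1, x) | x. x \<in> carrier M \<and> x \<otimes>\<^bsub>M\<^esub> x = \<one>\<^bsub>M\<^esub>}
    \<and> commutant (LM_carrier M) (LM_mult M)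
           = {(K1, x) | x. x \<in> carrier M \<and> x \<otimes>\<^bsub>M\<^esub> x = \<one>\<^bsub>M\<^esub>}"
proof -
  interpret comm_group M by (rule assms(1))
  obtain g where g: "g \<in> carrier M" "g \<otimes>\<^bsub>M\<^esub> g \<noteq> \<one>\<^bsub>M\<^esub>" using assms(2) by blast
  have nucleus: "nucleus (LM_carrier M) (LM_mult M)
           = {(K1, x) | x. x \<in> carrier M \<and> x \<otimes>\<^bsub>M\<^esub> x = \<one>\<^bsub>M\<^esub>}"
    unfolding nucleus_def left_nucleus_LM middle_nucleus_LM[OF g] right_nucleus_LM[OF g] by auto
  then have "center (LM_carrier M) (LM_mult M)
           = {(K1, x) | x. x \<in> carrier M \<and> x \<otimes>\<^bsub>M\<^esub> x = \<one>\<^bsub>M\<^esub>}"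
    unfolding center_def commutant_LM[OF g] by simp
  with nucleus show ?thesis
    using left_nucleus_LM middle_nucleus_LM[OF g] right_nucleus_LM[OF g] commutant_LM[OF g] by blast
qed

end
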